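(* Let $\mathcal{P}=((v_1,\dots,v_p),(v'_0,\dots,v'_{p+1}))$ be a dangerous, non-separable caterpillar structure for an assignment $(x,y)$, and let $\ell=\min_{v\in\Gamma(\mathcal{P})}L(v)$. Let $I=\{i: 0\le i\le p+1,\ v'_i\ne\mathrm{nil},\ L(v'_i)>\ell\}$. Then $\sum_{i\in I}(1-y_{v'_i})<2$.
   Context: $G=(V,E)$ undirected unweighted, $\mathrm{dist}_G$ shortest-path distance, $L:V\to\mathbb{N}$. An assignment is $x:V\times V\to\mathbb{R}_{\ge0}$, $y:V\to\mathbb{R}_{\ge0}$. A $\delta$-caterpillar structure for $(x,y)$ is a sequence of distinct vertices $P=(v_1,\dots,v_p)$ with a sequence $P'=(v'_0,\dots,v'_{p+1})$ such that: (i) $y_{v_i}=1$ for $i=1..p$; (ii) $\mathrm{dist}_G(v_i,v_{i+1})\le\delta$; (iii) each $v'_i$ is $\mathrm{nil}$ or a vertex not in $\{v_1,\dots,v_p\}$; (iv) for $1\le i\le p$, if $v'_i\ne\mathrm{nil}$ then $L(v_i)\ge L(v'_i)$, $0<y_{v'_i}<1$, $\mathrm{dist}_G(v_i,v'_i)\le\delta$; (v) if $v'_0\ne\mathrm{nil}$ then $\mathrm{dist}_G(v'_0,v_1)\le\delta$, $0<y_{v'_0}<1$; (vi) if $v'_{p+1}\ne\mathrm{nil}$ then $\mathrm{dist}_G(v'_{p+1},v_p)\le\delta$, $0<y_{v'_{p+1}}<1$; (vii) non-nil entries of $P'$ pairwise distinct; (viii) $\sum_{v\in V(P')}y_v\in\mathbb{Z}$,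 $V(P')$ being the set of non-nil entries. $\Gamma(\mathcal{P})$ is the set of $v_i$ for which there exist $0\le i_0<i<i_1\le p+1$ with $v'_{i_0},v'_{i_1}\ne\mathrm{nil}$ and $L(v'_{i_0})>L(v_i)$, $L(v'_{i_1})>L(v_i)$; $\mathcal{P}$ is safe if $\Gamma(\mathcal{P})=\emptyset$, dangerous otherwise. A dangerous $\mathcal{P}$ is separable iff there is $1\le i\le p$ with $v_i\in\Gamma(\mathcal{P})$, $L(v_i)=\min_{v\in\Gamma(\mathcal{P})}L(v)$, and either (a) $S_1\ge\lceil S_2\rceil-S_2$ where $S_2=\sum_{i<j\le p+1,\ v'_j\ne\mathrm{nil}}y_{v'_j}$ and $S_1=\sum(1-y_{v'_j})$ over $i<j\le p+1$ with $v'_j\ne\mathrm{nil}$ and $L(v'_j)>L(v_i)$; or (b) the same with $j$ ranging over $0\le j<i$ instead. A caterpillar structure that is not separable is called non-separable (in particular every safe one is non-separable). *)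

theory Defs
  imports Complex_Main "HOL-Library.Extended_Nat"
begin

definition ugraph :: "'v set \<Rightarrow> ('v \<times> 'v) set \<Rightarrow> bool" where
  "ugraph V E \<longleftrightarrow> finite V \<and> E \<subseteq> V \<times> V \<and> sym E \<and> irrefl E"

definition walk :: "('v \<times> 'v) set \<Rightarrow> 'v list \<Rightarrow> bool" where
  "walk E xs \<longleftrightarrow> xs \<noteq> [] \<and> (\<forall>i. Suc i < length xs \<longrightarrow> (xs ! i, xs ! Suc i) \<in> E)"

definition gdist :: "('v \<times> 'v) set \<Rightarrow> 'v \<Rightarrow> 'v \<Rightarrow> enat" where
  "gdist E u v = (INF xs \<in> {xs. walk E xs \<and> hd xs = u \<and> last xs = v}. enat (length xs - 1))"

(* Caterpillar structure: vs = [v_1,...,v_p] (so v_i = vs!(i-1)),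
   ps = [v'_0,...,v'_{p+1}] with None for nil (so v'_i = ps!i). *)
definition VP' :: "'v option list \<Rightarrow> 'v set" where
  "VP' ps = {w. Some w \<in> set ps}"

definition caterpillar ::
  "'v set \<Rightarrow> ('v \<times> 'v) set \<Rightarrow> nat \<Rightarrow> ('v \<Rightarrow> nat) \<Rightarrow> ('v \<Rightarrow> real)
   \<Rightarrow> 'v list \<Rightarrow> 'v option list \<Rightarrow> bool" where
  "caterpillar V E \<delta> L y vs ps \<longleftrightarrow>
     (let p = length vs in
      p \<ge> 1 \<and> length ps = p + 2 \<and> distinct vs \<and> set vs \<subseteq> V \<and>
      (\<forall>i<p. y (vs ! i) = 1) \<and>
      (\<forall>i. Suc i < p \<longrightarrow> gdist E (vs ! i) (vs ! Suc i) \<le> enat \<delta>) \<and>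
      (\<forall>i\<le>p+1. \<forall>w. ps ! i = Some w \<longrightarrow> w \<in> V \<and> w \<notin> set vs) \<and>
      (\<forall>i\<in>{1..p}. \<forall>w. ps ! i = Some w \<longrightarrow>
          L (vs ! (i - 1)) \<ge> L w \<and> 0 < y w \<and> y w < 1 \<and> gdist E (vs ! (i - 1)) w \<le> enat \<delta>) \<and>
      (\<forall>w. ps ! 0 = Some w \<longrightarrow> gdist E w (vs ! 0) \<le> enat \<delta> \<and> 0 < y w \<and> y w < 1) \<and>
      (\<forall>w. ps ! (p + 1) = Some w \<longrightarrow> gdist E w (vs ! (p - 1)) \<le> enat \<delta> \<and> 0 < y w \<and> y w < 1) \<and>
      (\<forall>i\<le>p+1. \<forall>j\<le>p+1. \<forall>w. ps ! i = Some w \<and> ps ! j = Some w \<longrightarrow> i = j) \<and>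
      (\<Sum>v\<in>VP' ps. y v) \<in> \<int>)"

definition Gamma :: "('v \<Rightarrow> nat) \<Rightarrow> 'v list \<Rightarrow> 'v option list \<Rightarrow> 'v set" where
  "Gamma L vs ps = {vs ! (i - 1) | i. 1 \<le> i \<and> i \<le> length vs \<and>
      (\<exists>i0 i1 a b. i0 < i \<and> i < i1 \<and> i1 \<le> length vs + 1 \<and>
         ps ! i0 = Some a \<and> ps ! i1 = Some b \<and>
         L a > L (vs ! (i - 1)) \<and> L b > L (vs ! (i - 1)))}"

definition dangerous :: "('v \<Rightarrow> nat) \<Rightarrow> 'v list \<Rightarrow> 'v option list \<Rightarrow> bool" where
  "dangerous L vs ps \<longleftrightarrow> Gamma L vs ps \<noteq> {}"

definition separable ::
  "('v \<Rightarrow> nat) \<Rightarrow> ('v \<Rightarrow> real) \<Rightarrow> 'v list \<Rightarrow> 'v option list \<Rightarrow> bool" where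
  "separable L y vs ps \<longleftrightarrow> dangerous L vs ps \<and>
     (\<exists>i\<in>{1..length vs}. vs ! (i - 1) \<in> Gamma L vs ps \<and>
        L (vs ! (i - 1)) = Min (L ` Gamma L vs ps) \<and>
        ((let J = {j. i < j \<and> j \<le> length vs + 1 \<and> ps ! j \<noteq> None};
              S2 = (\<Sum>j\<in>J. y (the (ps ! j)));
              S1 = (\<Sum>j\<in>{j\<in>J. L (the (ps ! j)) > L (vs ! (i - 1))}. 1 - y (the (ps ! j)))
          in S1 \<ge> of_int \<lceil>S2\<rceil> - S2) \<or>
         (let J = {j. j < i \<and> ps ! j \<noteq> None};
              S2 = (\<Sum>j\<in>J. y (the (ps ! j)));
              S1 = (\<Sum>j\<in>{j\<in>J. L (the (ps ! j)) > L (vs ! (i - 1))}. 1 - y (the (ps ! j)))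
          in S1 \<ge> of_int \<lceil>S2\<rceil> - S2)))"

end

theory Submission
  imports Defs
begin

(* Let l be the least level L(v) of a vertex v in Gamma(P), attained
   at a spine vertex v_i.  Every leg v'_j with L(v'_j) > l lies strictly to the
   right (j > i) or strictly to the left (j < i) of position i: the leg v'_i at
   position i itself satisfies L(v'_i) <= L(v_i) = l by the caterpillar condition.
   Hence the sum of (1 - y) over the high legs splits into a right part S1 and a
   left part S1'.  Non-separability at v_i says that S1 < ceil S2 - S2 for the
   corresponding S2, and ceil S2 - S2 < 1 always; so each part is below 1 and the
   total is below 2. *)

lemma below_ceiling_gap_lt_one:
  fixes S1 S2 :: real
  assumes "\<not> S1 \<ge> of_int \<lceil>S2\<rceil> - S2"
  shows "S1 < 1"
  using assms by linarith

lemma Gamma_min_attained: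
  assumes "dangerous L vs ps"
  obtains i where "i \<in> {1..length vs}" "vs ! (i - 1) \<in> Gamma L vs ps"
    "L (vs ! (i - 1)) = Min (L ` Gamma L vs ps)"
proof -
  have "Gamma L vs ps \<subseteq> set vs" unfolding Gamma_def by auto
  hence "finite (Gamma L vs ps)" by (rule finite_subset) simp
  moreover have "Gamma L vs ps \<noteq> {}" using assms unfolding dangerous_def .
  ultimately have "Min (L ` Gamma L vs ps) \<in> L ` Gamma L vs ps" by simp
  then obtain g where "g \<in> Gamma L vs ps" "L g = Min (L ` Gamma L vs ps)" by auto
  moreover from \<open>g \<in> Gamma L vs ps\<close> obtain i
    where "1 \<le> i" "i \<le> length vs" "g = vs ! (i - 1)"
    unfolding Gamma_def by blast
  ultimately show thesis using that by auto
qed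

lemma caterpillar_leg_level_le:
  assumes "caterpillar V E \<delta> L y vs ps" and "i \<in> {1..length vs}" and "ps ! i = Some w"
  shows "L w \<le> L (vs ! (i - 1))"
  using assms unfolding caterpillar_def Let_def by blast

lemma nonseparable_side_excess_lt_one:
  assumes "\<not> separable L y vs ps" and "dangerous L vs ps"
    and "i \<in> {1..length vs}" and "vs ! (i - 1) \<in> Gamma L vs ps"
    and "L (vs ! (i - 1)) = Min (L ` Gamma L vs ps)"
  shows "(\<Sum>j\<in>{j. i < j \<and> j \<le> length vs + 1 \<and> ps ! j \<noteq> None \<and>
            L (the (ps ! j)) > L (vs ! (i - 1))}. 1 - y (the (ps ! j))) < 1"
    and "(\<Sum>j\<in>{j. j < i \<and> ps ! j \<noteq> None \<and>
            L (the (ps ! j)) > L (vs ! (i - 1))}. 1 - y (the (ps ! j))) < 1"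
proof -
  let ?Jr = "{j. i < j \<and> j \<le> length vs + 1 \<and> ps ! j \<noteq> None}"
  let ?Jl = "{j. j < i \<and> ps ! j \<noteq> None}"
  let ?excess = "\<lambda>J. \<Sum>j\<in>{j\<in>J. L (the (ps ! j)) > L (vs ! (i - 1))}. 1 - y (the (ps ! j))"
  let ?S2 = "\<lambda>J. \<Sum>j\<in>J. y (the (ps ! j))"
  have "\<not> ?excess ?Jr \<ge> of_int \<lceil>?S2 ?Jr\<rceil> - ?S2 ?Jr"
    and "\<not> ?excess ?Jl \<ge> of_int \<lceil>?S2 ?Jl\<rceil> - ?S2 ?Jl"
    using assms unfolding separable_def Let_def by blast+
  hence "?excess ?Jr < 1" and "?excess ?Jl < 1"
    by (blast intro: below_ceiling_gap_lt_one)+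
  then show "(\<Sum>j\<in>{j. i < j \<and> j \<le> length vs + 1 \<and> ps ! j \<noteq> None \<and>
            L (the (ps ! j)) > L (vs ! (i - 1))}. 1 - y (the (ps ! j))) < 1"
    and "(\<Sum>j\<in>{j. j < i \<and> ps ! j \<noteq> None \<and>
            L (the (ps ! j)) > L (vs ! (i - 1))}. 1 - y (the (ps ! j))) < 1"
    by (simp_all add: conj_assoc)
qed

lemma high_legs_sum_split:
  fixes f :: "nat \<Rightarrow> real" and lvl :: "'v \<Rightarrow> nat"
  assumes "i \<le> n" and "\<And>w. ps ! i = Some w \<Longrightarrow> lvl w \<le> l"
  shows "(\<Sum>j\<in>{j. j \<le> n \<and> ps ! j \<noteq> None \<and> lvl (the (ps ! j)) > l}. f j)
       = (\<Sum>j\<in>{j. i < j \<and> j \<le> n \<and> ps ! j \<noteq> None \<and> lvl (the (ps ! j)) > l}. f j)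
       + (\<Sum>j\<in>{j. j < i \<and> ps ! j \<noteq> None \<and> lvl (the (ps ! j)) > l}. f j)"
proof -
  let ?high = "\<lambda>j. ps ! j \<noteq> None \<and> lvl (the (ps ! j)) > l"
  let ?R = "{j. i < j \<and> j \<le> n \<and> ?high j}"
  let ?Lft = "{j. j < i \<and> ?high j}"
  have "\<not> ?high i"
    using assms(2) by (cases "ps ! i") (auto simp: not_less)
  have "{j. j \<le> n \<and> ?high j} = ?R \<union> ?Lft"
  proof (rule set_eqI)
    fix j
    have "j \<noteq> i" if "?high j" using that \<open>\<not> ?high i\<close> by blast
    then show "j \<in> {j. j \<le> n \<and> ?high j} \<longleftrightarrow> j \<in> ?R \<union> ?Lft"
      using assms(1) by (auto simp: nat_neq_iff)
  qed
  moreover have "finite ?R" "finite ?Lft" "?R \<inter> ?Lft = {}" by auto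
  ultimately show ?thesis by (simp add: sum.union_disjoint)
qed

theorem mainTheorem14:
  fixes V :: "'v set" and E :: "('v \<times> 'v) set" and \<delta> :: nat and L :: "'v \<Rightarrow> nat"
    and x :: "'v \<Rightarrow> 'v \<Rightarrow> real" and y :: "'v \<Rightarrow> real"
    and vs :: "'v list" and ps :: "'v option list"
  assumes "ugraph V E"
    and "\<forall>u v. x u v \<ge> 0" and "\<forall>v. y v \<ge> 0"
    and "caterpillar V E \<delta> L y vs ps"
    and "dangerous L vs ps"
    and "\<not> separable L y vs ps"
  shows "(\<Sum>i\<in>{i. i \<le> length vs + 1 \<and> ps ! i \<noteq> None \<and>
              L (the (ps ! i)) > Min (L ` Gamma L vs ps)}. 1 - y (the (ps ! i))) < 2"
proof -
  obtain i where i: "i \<in> {1..length vs}" "vs ! (i - 1) \<in> Gamma L vs ps"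
    and min: "L (vs ! (i - 1)) = Min (L ` Gamma L vs ps)"
    using Gamma_min_attained[OF assms(5)] .
  have leg: "\<And>w. ps ! i = Some w \<Longrightarrow> L w \<le> L (vs ! (i - 1))"
    using caterpillar_leg_level_le[OF assms(4) i(1)] .
  have right: "(\<Sum>j\<in>{j. i < j \<and> j \<le> length vs + 1 \<and> ps ! j \<noteq> None \<and>
            L (the (ps ! j)) > L (vs ! (i - 1))}. 1 - y (the (ps ! j))) < 1"
    and left: "(\<Sum>j\<in>{j. j < i \<and> ps ! j \<noteq> None \<and>
            L (the (ps ! j)) > L (vs ! (i - 1))}. 1 - y (the (ps ! j))) < 1"
    using nonseparable_side_excess_lt_one[OF assms(6,5) i min] by blast+
  have "i \<le> length vs + 1" using i(1) by simp
  from high_legs_sum_split[where ps = ps and lvl = L and l = "L (vs ! (i - 1))"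
      and f = "\<lambda>j. 1 - y (the (ps ! j))", OF this leg]
  show ?thesis unfolding min[symmetric] using right left by linarith
qed

end
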